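(* Let $m\ge 2$ and let $Q_2$ be a bivariate quasi-copula. Then $Q^*(u):=Q_2(\min_{2\le i\le m}u_i,\,u_1)$, $u=(u_1,\dots,u_m)\in[0,1]^m$, is an $m$-variate quasi-copula, and its survival function satisfies $$\widehat{Q^*}(u_1,\dots,u_m)=\widehat{Q_2}\big(\max_{2\le i\le m}u_i,\,u_1\big)\quad\text{for all }(u_1,\dots,u_m)\in[0,1]^m.$$
   Context: An $m$-variate quasi-copula is $Q:[0,1]^m\to[0,1]$ that is grounded ($Q(u)=0$ whenever some $u_i=0$), has uniform marginals ($Q(1,\dots,1,u_i,1,\dots,1)=u_i$), is nondecreasing in each argument, and satisfies $|Q(v)-Q(u)|\le\sum_i|v_i-u_i|$. The survival function of an $m$-variate quasi-copula $Q$ is $\widehat{Q}(u)=\sum_{J\subseteq\{1,\dots,m\}}(-1)^{m-|J|}Q(y^J)$, where $y^J_i=1$ if $i\in J$ and $y^J_i=u_i$ otherwise (so for $m=2$, $\widehat{Q}(u_1,u_2)=1-u_1-u_2+Q(u_1,u_2)$). *)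

theory Defs
  imports "HOL-Library.FuncSet" Complex_Main
begin

text \<open>Points of [0,1]^m are represented extensionally as functions on the
index set {1..m} (value undefined outside).\<close>

definition cube :: "nat \<Rightarrow> (nat \<Rightarrow> real) set" where
  "cube m = PiE {1..m} (\<lambda>_. {0..1})"

definition quasi_copula :: "nat \<Rightarrow> ((nat \<Rightarrow> real) \<Rightarrow> real) \<Rightarrow> bool" where
  "quasi_copula m Q \<longleftrightarrow>
     (\<forall>u\<in>cube m. Q u \<in> {0..1}) \<and>
     (\<forall>u\<in>cube m. (\<exists>i\<in>{1..m}. u i = 0) \<longrightarrow> Q u = 0) \<and>
     (\<forall>u\<in>cube m. \<forall>i\<in>{1..m}. (\<forall>j\<in>{1..m} - {i}. u j = 1) \<longrightarrow> Q u = u i) \<and>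
     (\<forall>u\<in>cube m. \<forall>v\<in>cube m. \<forall>i\<in>{1..m}.
        (\<forall>j\<in>{1..m} - {i}. u j = v j) \<and> u i \<le> v i \<longrightarrow> Q u \<le> Q v) \<and>
     (\<forall>u\<in>cube m. \<forall>v\<in>cube m. \<bar>Q v - Q u\<bar> \<le> (\<Sum>i\<in>{1..m}. \<bar>v i - u i\<bar>))"

definition yJ :: "nat \<Rightarrow> nat set \<Rightarrow> (nat \<Rightarrow> real) \<Rightarrow> (nat \<Rightarrow> real)" where
  "yJ m J u = restrict (\<lambda>i. if i \<in> J then 1 else u i) {1..m}"

definition survival :: "nat \<Rightarrow> ((nat \<Rightarrow> real) \<Rightarrow> real) \<Rightarrow> (nat \<Rightarrow> real) \<Rightarrow> real" where
  "survival m Q u = (\<Sum>J\<in>Pow {1..m}. (-1) ^ (m - card J) * Q (yJ m J u))"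

definition pt2 :: "real \<Rightarrow> real \<Rightarrow> (nat \<Rightarrow> real)" where
  "pt2 a b = restrict (\<lambda>i. if i = 1 then a else b) {1..2}"

end

theory Submission
  imports Defs
begin

text \<open>The map \<open>u \<mapsto> min {u\<^sub>2, \<dots>, u\<^sub>m}\<close> is monotone, \<open>1\<close>-Lipschitz for the
  \<open>\<ell>\<^sup>1\<close>-distance and returns \<open>u\<^sub>i\<close> when all other coordinates are \<open>1\<close>, so the quasi-copula
  axioms pass from \<open>Q\<^sub>2\<close> to \<open>Q\<^sup>*\<close>. In the survival sum, index the points \<open>y\<^sup>J\<close> by the
  set \<open>T\<close> of coordinates not set to \<open>1\<close>: the term only depends on whether \<open>1 \<in> T\<close> and on
  \<open>min {1, u\<^sub>t | t \<in> T, t \<ge> 2}\<close>, and the alternating sum over \<open>T \<subseteq> {2..m}\<close> of a function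
  \<open>g\<close> of this minimum collapses to \<open>g 1 - g (max {u\<^sub>2, \<dots>, u\<^sub>m})\<close>, which is the bivariate
  survival function at \<open>(max {u\<^sub>2, \<dots>, u\<^sub>m}, u\<^sub>1)\<close>.\<close>

lemma sum_Pow_insert:
  fixes f :: "'a set \<Rightarrow> 'b::comm_monoid_add"
  assumes "finite A" "a \<notin> A"
  shows "(\<Sum>X\<in>Pow (insert a A). f X) = (\<Sum>X\<in>Pow A. f X) + (\<Sum>X\<in>Pow A. f (insert a X))"
proof -
  have "inj_on (insert a) (Pow A)"
    using assms(2) by (intro inj_onI) (metis PowD insert_ident subsetD)
  then show ?thesis
    unfolding Pow_insert using assms
    by (subst sum.union_disjoint) (auto simp: sum.reindex)
qed

lemma alternating_sum_Pow_Min: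
  fixes u :: "'a \<Rightarrow> 'b::linorder" and g :: "'b \<Rightarrow> 'c::comm_ring_1"
  assumes "finite S" "S \<noteq> {}"
  shows "(\<Sum>T\<in>Pow S. (-1) ^ card T * g (Min (insert c (u ` T)))) = g c - g (min c (Max (u ` S)))"
  using assms
proof (induction S arbitrary: c rule: finite_ne_induct)
  case (singleton a)
  then show ?case by (simp add: Pow_insert min.commute)
next
  case (insert a S)
  have step: "(-1) ^ card (insert a T) * g (Min (insert c (u ` insert a T)))
      = - ((-1) ^ card T * g (Min (insert (min c (u a)) (u ` T))))" if "T \<in> Pow S" for T
  proof -
    have "finite T" "a \<notin> T"
      using that finite_subset insert.hyps(1,3) by auto
    then show ?thesis
      by (cases "T = {}") (simp_all add: min.assoc)
  qed
  have "(\<Sum>T\<in>Pow (insert a S). (-1) ^ card T * g (Min (insert c (u ` T))))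
      = (\<Sum>T\<in>Pow S. (-1) ^ card T * g (Min (insert c (u ` T))))
        - (\<Sum>T\<in>Pow S. (-1) ^ card T * g (Min (insert (min c (u a)) (u ` T))))"
    using insert.hyps by (simp add: sum_Pow_insert step sum_negf del: image_insert)
  also have "\<dots> = (g c - g (min c (Max (u ` S)))) - (g (min c (u a)) - g (min (min c (u a)) (Max (u ` S))))"
    by (simp only: insert.IH)
  also have "\<dots> = g c - g (min c (max (u a) (Max (u ` S))))"
    \<comment> \<open>\<open>min c\<close> is monotone, so it maps \<open>{u a, Max (u ` S)}\<close> onto \<open>{min c (min \<dots>), min c (max \<dots>)}\<close>\<close>
    by (cases "u a \<le> Max (u ` S)"; cases "c \<le> u a"; cases "c \<le> Max (u ` S)")
       (simp_all add: min_def max_def)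
  finally show ?case using insert.hyps by simp
qed

lemma Min_image_if_const:
  fixes u :: "'a \<Rightarrow> 'b::linorder"
  assumes "finite S" "S \<noteq> {}" "T \<subseteq> S" "\<forall>i\<in>T. u i \<le> c"
  shows "Min ((\<lambda>i. if i \<in> T then u i else c) ` S) = Min (insert c (u ` T))"
proof (rule antisym)
  let ?f = "\<lambda>i. if i \<in> T then u i else c"
  have fin: "finite (?f ` S)" "?f ` S \<noteq> {}" "finite (insert c (u ` T))"
    using assms finite_subset[OF assms(3,1)] by auto
  have below_u: "Min (?f ` S) \<le> u t" if "t \<in> T" for t
    using Min_le[OF fin(1), of "?f t"] that assms(3) by auto
  obtain i where i: "i \<in> S" using assms(2) by auto
  have "Min (?f ` S) \<le> ?f i" using fin(1) i by simp
  also have "\<dots> \<le> c" using assms(4) by simp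
  finally have "Min (?f ` S) \<le> c" .
  then show "Min (?f ` S) \<le> Min (insert c (u ` T))"
    using fin(3) below_u by simp
  show "Min (insert c (u ` T)) \<le> Min (?f ` S)"
    using fin by auto
qed

lemma abs_Min_image_diff_le_sum:
  fixes u v :: "'a \<Rightarrow> real"
  assumes "finite S" "S \<noteq> {}"
  shows "\<bar>Min (v ` S) - Min (u ` S)\<bar> \<le> (\<Sum>i\<in>S. \<bar>v i - u i\<bar>)"
proof -
  have Min_le: "Min (v ` S) \<le> Min (u ` S) + (\<Sum>i\<in>S. \<bar>v i - u i\<bar>)" for u v :: "'a \<Rightarrow> real"
  proof -
    have "Min (u ` S) \<in> u ` S" using assms by simp
    then obtain j where j: "j \<in> S" "u j = Min (u ` S)" by auto
    have "Min (v ` S) \<le> v j" using assms j by simp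
    moreover have "\<bar>v j - u j\<bar> \<le> (\<Sum>i\<in>S. \<bar>v i - u i\<bar>)"
      using member_le_sum[of j S "\<lambda>i. \<bar>v i - u i\<bar>"] j assms by auto
    ultimately show ?thesis using j by linarith
  qed
  show ?thesis
    using Min_le[of v u] Min_le[of u v] by (simp add: abs_minus_commute)
qed

lemma quasi_copulaI:
  assumes "\<And>u. u \<in> cube m \<Longrightarrow> Q u \<in> {0..1}"
    and "\<And>u i. u \<in> cube m \<Longrightarrow> i \<in> {1..m} \<Longrightarrow> u i = 0 \<Longrightarrow> Q u = 0"
    and "\<And>u i. u \<in> cube m \<Longrightarrow> i \<in> {1..m} \<Longrightarrow> (\<forall>j\<in>{1..m} - {i}. u j = 1) \<Longrightarrow> Q u = u i"
    and "\<And>u v i. u \<in> cube m \<Longrightarrow> v \<in> cube m \<Longrightarrow> i \<in> {1..m} \<Longrightarrow>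
           (\<forall>j\<in>{1..m} - {i}. u j = v j) \<Longrightarrow> u i \<le> v i \<Longrightarrow> Q u \<le> Q v"
    and "\<And>u v. u \<in> cube m \<Longrightarrow> v \<in> cube m \<Longrightarrow> \<bar>Q v - Q u\<bar> \<le> (\<Sum>i\<in>{1..m}. \<bar>v i - u i\<bar>)"
  shows "quasi_copula m Q"
  using assms unfolding quasi_copula_def by blast

context
  fixes m :: nat and Q :: "(nat \<Rightarrow> real) \<Rightarrow> real"
  assumes qc: "quasi_copula m Q"
begin

lemma quasi_copula_range: "u \<in> cube m \<Longrightarrow> Q u \<in> {0..1}"
  using qc unfolding quasi_copula_def by simp

lemma quasi_copula_grounded: "u \<in> cube m \<Longrightarrow> i \<in> {1..m} \<Longrightarrow> u i = 0 \<Longrightarrow> Q u = 0"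
  using qc unfolding quasi_copula_def by (meson bexI)

lemma quasi_copula_marginal:
  assumes "u \<in> cube m" "i \<in> {1..m}" "\<And>j. j \<in> {1..m} \<Longrightarrow> j \<noteq> i \<Longrightarrow> u j = 1"
  shows "Q u = u i"
proof -
  have "\<forall>j\<in>{1..m} - {i}. u j = 1" using assms(3) by blast
  then show ?thesis using qc assms(1,2) unfolding quasi_copula_def by simp
qed

lemma quasi_copula_mono:
  assumes "u \<in> cube m" "v \<in> cube m" "i \<in> {1..m}"
    "\<And>j. j \<in> {1..m} \<Longrightarrow> j \<noteq> i \<Longrightarrow> u j = v j" "u i \<le> v i"
  shows "Q u \<le> Q v"
proof -
  have "\<forall>u\<in>cube m. \<forall>v\<in>cube m. \<forall>i\<in>{1..m}.
      (\<forall>j\<in>{1..m} - {i}. u j = v j) \<and> u i \<le> v i \<longrightarrow> Q u \<le> Q v"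
    using qc unfolding quasi_copula_def by (elim conjE)
  then show ?thesis using assms by blast
qed

lemma quasi_copula_lipschitz:
  "u \<in> cube m \<Longrightarrow> v \<in> cube m \<Longrightarrow> \<bar>Q v - Q u\<bar> \<le> (\<Sum>i\<in>{1..m}. \<bar>v i - u i\<bar>)"
  using qc unfolding quasi_copula_def by simp

end

lemma cube_apply: "u \<in> cube m \<Longrightarrow> i \<in> {1..m} \<Longrightarrow> u i \<in> {0..1}"
  by (auto simp: cube_def PiE_iff)

lemma pt2_in_cube: "a \<in> {0..1} \<Longrightarrow> b \<in> {0..1} \<Longrightarrow> pt2 a b \<in> cube 2"
  unfolding pt2_def cube_def by (auto simp: PiE_iff)

lemma pt2_apply: "pt2 a b i = (if i = 1 then a else if i = 2 then b else undefined)"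
  unfolding pt2_def by auto

lemma atLeastAtMost_1_2: "{1..2::nat} = {1, 2}"
  by auto

lemma yJ_pt2: "yJ 2 J (pt2 a b) = pt2 (if 1 \<in> J then 1 else a) (if 2 \<in> J then 1 else b)"
  by (auto simp: fun_eq_iff yJ_def pt2_apply)

lemma survival_2:
  "survival 2 Q (pt2 a b) = Q (pt2 a b) - Q (pt2 1 b) - Q (pt2 a 1) + Q (pt2 1 1)"
proof -
  have "Pow {1..2::nat} = {{}, {1}, {2}, {1, 2}}"
    unfolding atLeastAtMost_1_2 Pow_insert by auto
  then show ?thesis
    unfolding survival_def by (simp add: yJ_pt2)
qed

context
  fixes Q :: "(nat \<Rightarrow> real) \<Rightarrow> real"
  assumes qc: "quasi_copula 2 Q"
begin

lemma quasi_copula2_range: "a \<in> {0..1} \<Longrightarrow> b \<in> {0..1} \<Longrightarrow> Q (pt2 a b) \<in> {0..1}"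
  using quasi_copula_range[OF qc pt2_in_cube] .

lemma quasi_copula2_grounded:
  assumes "a \<in> {0..1}" "b \<in> {0..1}" "a = 0 \<or> b = 0"
  shows "Q (pt2 a b) = 0"
  using assms quasi_copula_grounded[OF qc pt2_in_cube[OF assms(1,2)], of 1]
    quasi_copula_grounded[OF qc pt2_in_cube[OF assms(1,2)], of 2]
  by (auto simp: pt2_apply)

lemma quasi_copula2_marginal1: "a \<in> {0..1} \<Longrightarrow> Q (pt2 a 1) = a"
  using quasi_copula_marginal[OF qc pt2_in_cube, of a 1 1] by (auto simp: pt2_apply)

lemma quasi_copula2_marginal2: "b \<in> {0..1} \<Longrightarrow> Q (pt2 1 b) = b"
  using quasi_copula_marginal[OF qc pt2_in_cube, of 1 b 2] by (auto simp: pt2_apply)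

lemma quasi_copula2_mono:
  assumes "a \<in> {0..1}" "b \<in> {0..1}" "a' \<in> {0..1}" "b' \<in> {0..1}" "a \<le> a'" "b \<le> b'"
  shows "Q (pt2 a b) \<le> Q (pt2 a' b')"
proof -
  have "Q (pt2 a b) \<le> Q (pt2 a' b)"
    using assms by (intro quasi_copula_mono[OF qc pt2_in_cube pt2_in_cube, of _ _ _ _ 1])
      (auto simp: pt2_apply)
  also have "\<dots> \<le> Q (pt2 a' b')"
    using assms by (intro quasi_copula_mono[OF qc pt2_in_cube pt2_in_cube, of _ _ _ _ 2])
      (auto simp: pt2_apply)
  finally show ?thesis .
qed

lemma quasi_copula2_lipschitz:
  assumes "a \<in> {0..1}" "b \<in> {0..1}" "a' \<in> {0..1}" "b' \<in> {0..1}"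
  shows "\<bar>Q (pt2 a' b') - Q (pt2 a b)\<bar> \<le> \<bar>a' - a\<bar> + \<bar>b' - b\<bar>"
  using quasi_copula_lipschitz[OF qc pt2_in_cube[OF assms(1,2)] pt2_in_cube[OF assms(3,4)]]
  unfolding atLeastAtMost_1_2 by (simp add: pt2_apply)

end

lemma survival_eq_sum_complement:
  "survival m Q u = (\<Sum>T\<in>Pow {1..m}. (-1) ^ card T * Q (yJ m ({1..m} - T) u))"
  unfolding survival_def
proof (rule sum.reindex_bij_witness[of _ "\<lambda>T. {1..m} - T" "\<lambda>T. {1..m} - T"])
  fix T assume "T \<in> Pow {1..m}"
  then show "(-1) ^ card ({1..m} - T) * Q (yJ m ({1..m} - ({1..m} - T)) u)
      = (-1) ^ (m - card T) * Q (yJ m T u)"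
    by (simp add: card_Diff_subset double_diff finite_subset)
qed auto

definition min_extension :: "nat \<Rightarrow> ((nat \<Rightarrow> real) \<Rightarrow> real) \<Rightarrow> (nat \<Rightarrow> real) \<Rightarrow> real" where
  "min_extension m Q u = Q (pt2 (Min (u ` {2..m})) (u 1))"

context
  fixes m :: nat
  assumes m: "2 \<le> m"
begin

lemma atLeastAtMost_1_eq_insert: "{1..m} = insert 1 {2..m}"
  using m by auto

lemma cube_apply_1: "u \<in> cube m \<Longrightarrow> u 1 \<in> {0..1}"
  using m by (intro cube_apply) auto

lemma Min_image_tail_in_unit:
  assumes "u \<in> cube m"
  shows "Min (u ` {2..m}) \<in> {0..1}"
proof -
  have "Min (u ` {2..m}) \<in> u ` {2..m}" using m by simp
  then obtain i where i: "i \<in> {2..m}" "Min (u ` {2..m}) = u i" by blast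
  then have "i \<in> {1..m}" by simp
  then show ?thesis using cube_apply[OF assms] i(2) by simp
qed

lemma min_extension_grounded:
  assumes Q: "quasi_copula 2 Q" and u: "u \<in> cube m" and i: "i \<in> {1..m}" "u i = 0"
  shows "min_extension m Q u = 0"
proof -
  have "Min (u ` {2..m}) = 0 \<or> u 1 = 0"
  proof (cases "i = 1")
    case False
    then have "Min (u ` {2..m}) \<le> 0" using i by (auto intro: Min_le)
    then show ?thesis using Min_image_tail_in_unit[OF u] by auto
  qed (use i in simp)
  then show ?thesis
    unfolding min_extension_def
    using quasi_copula2_grounded[OF Q Min_image_tail_in_unit[OF u] cube_apply_1[OF u]] by simp
qed

lemma min_extension_marginal:
  assumes Q: "quasi_copula 2 Q" and u: "u \<in> cube m" and i: "i \<in> {1..m}"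
    and ones: "\<forall>j\<in>{1..m} - {i}. u j = 1"
  shows "min_extension m Q u = u i"
proof (cases "i = 1")
  case True
  then have "u ` {2..m} = {1}" using m ones by auto
  then show ?thesis
    unfolding min_extension_def using True quasi_copula2_marginal2[OF Q cube_apply_1[OF u]] by simp
next
  case False
  have "Min (u ` {2..m}) = u i"
  proof (rule antisym)
    show "Min (u ` {2..m}) \<le> u i" using i False by simp
    have "u i \<le> u j" if "j \<in> {2..m}" for j
      using that ones cube_apply[OF u i] by (cases "j = i") auto
    then show "u i \<le> Min (u ` {2..m})"
      using m by simp
  qed
  moreover have "u 1 = 1" using ones False m by auto
  ultimately show ?thesis
    unfolding min_extension_def using quasi_copula2_marginal1[OF Q cube_apply[OF u i]] by simp
qed

lemma min_extension_mono:
  assumes Q: "quasi_copula 2 Q" and u: "u \<in> cube m" and v: "v \<in> cube m"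
    and le: "\<And>j. j \<in> {1..m} \<Longrightarrow> u j \<le> v j"
  shows "min_extension m Q u \<le> min_extension m Q v"
proof -
  have "Min (u ` {2..m}) \<le> v j" if "j \<in> {2..m}" for j
  proof -
    have "Min (u ` {2..m}) \<le> u j" using that by simp
    also have "\<dots> \<le> v j" using that le[of j] by simp
    finally show ?thesis .
  qed
  then have "Min (u ` {2..m}) \<le> Min (v ` {2..m})"
    using m by simp
  then show ?thesis
    unfolding min_extension_def using m le[of 1]
    by (intro quasi_copula2_mono[OF Q Min_image_tail_in_unit[OF u] cube_apply_1[OF u]
          Min_image_tail_in_unit[OF v] cube_apply_1[OF v]]) simp_all
qed

lemma min_extension_lipschitz:
  assumes Q: "quasi_copula 2 Q" and u: "u \<in> cube m" and v: "v \<in> cube m"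
  shows "\<bar>min_extension m Q v - min_extension m Q u\<bar> \<le> (\<Sum>i\<in>{1..m}. \<bar>v i - u i\<bar>)"
proof -
  have "\<bar>min_extension m Q v - min_extension m Q u\<bar>
      \<le> \<bar>Min (v ` {2..m}) - Min (u ` {2..m})\<bar> + \<bar>v 1 - u 1\<bar>"
    unfolding min_extension_def
    by (intro quasi_copula2_lipschitz[OF Q] Min_image_tail_in_unit cube_apply_1 u v)
  also have "\<dots> \<le> (\<Sum>i\<in>{2..m}. \<bar>v i - u i\<bar>) + \<bar>v 1 - u 1\<bar>"
    using m abs_Min_image_diff_le_sum[of "{2..m}" v u] by simp
  also have "\<dots> = (\<Sum>i\<in>{1..m}. \<bar>v i - u i\<bar>)"
    unfolding atLeastAtMost_1_eq_insert by simp
  finally show ?thesis .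
qed

lemma quasi_copula_min_extension:
  assumes Q: "quasi_copula 2 Q"
  shows "quasi_copula m (min_extension m Q)"
proof (rule quasi_copulaI)
  show "min_extension m Q u \<in> {0..1}" if "u \<in> cube m" for u
    unfolding min_extension_def
    by (intro quasi_copula2_range[OF Q] Min_image_tail_in_unit cube_apply_1 that)
  show "min_extension m Q u \<le> min_extension m Q v"
    if "u \<in> cube m" "v \<in> cube m" "i \<in> {1..m}" "\<forall>j\<in>{1..m} - {i}. u j = v j" "u i \<le> v i"
    for u v i
  proof (rule min_extension_mono[OF Q that(1,2)])
    show "u j \<le> v j" if "j \<in> {1..m}" for j
      using that \<open>\<forall>j\<in>{1..m} - {i}. u j = v j\<close> \<open>u i \<le> v i\<close> by (cases "j = i") auto
  qed
  show "min_extension m Q u = 0" if "u \<in> cube m" "i \<in> {1..m}" "u i = 0" for u i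
    by (rule min_extension_grounded[OF Q that])
  show "min_extension m Q u = u i"
    if "u \<in> cube m" "i \<in> {1..m}" "\<forall>j\<in>{1..m} - {i}. u j = 1" for u i
    by (rule min_extension_marginal[OF Q that])
  show "\<bar>min_extension m Q v - min_extension m Q u\<bar> \<le> (\<Sum>i\<in>{1..m}. \<bar>v i - u i\<bar>)"
    if "u \<in> cube m" "v \<in> cube m" for u v
    by (rule min_extension_lipschitz[OF Q that])
qed

lemma min_extension_yJ:
  assumes u: "u \<in> cube m" and T: "T \<subseteq> {2..m}" "X \<inter> {2..m} = T"
  shows "min_extension m Q (yJ m ({1..m} - X) u)
    = Q (pt2 (Min (insert 1 (u ` T))) (if 1 \<in> X then u 1 else 1))"
proof -
  have "u i \<le> 1" if "i \<in> {2..m}" for i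
    using that cube_apply[OF u, of i] by simp
  then have "\<forall>i\<in>T. u i \<le> 1"
    using T(1) by blast
  moreover have "yJ m ({1..m} - X) u ` {2..m} = (\<lambda>i. if i \<in> T then u i else 1) ` {2..m}"
    using T by (intro image_cong) (auto simp: yJ_def)
  ultimately have "Min (yJ m ({1..m} - X) u ` {2..m}) = Min (insert 1 (u ` T))"
    using m Min_image_if_const[of "{2..m}" T u 1] T(1) by simp
  moreover have "yJ m ({1..m} - X) u 1 = (if 1 \<in> X then u 1 else 1)"
    using m by (simp add: yJ_def)
  ultimately show ?thesis
    by (simp add: min_extension_def)
qed

lemma survival_min_extension:
  assumes u: "u \<in> cube m"
  shows "survival m (min_extension m Q) u = survival 2 Q (pt2 (Max (u ` {2..m})) (u 1))"
proof -
  define S where "S = {2..m::nat}"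
  define f where "f T = (-1) ^ card T * min_extension m Q (yJ m ({1..m} - T) u)" for T
  define g where "g x = Q (pt2 x 1) - Q (pt2 x (u 1))" for x
  have S: "finite S" "S \<noteq> {}" "1 \<notin> S" "{1..m} = insert 1 S"
    using m atLeastAtMost_1_eq_insert by (auto simp: S_def)
  have "survival m (min_extension m Q) u = (\<Sum>T\<in>Pow (insert 1 S). f T)"
    unfolding survival_eq_sum_complement f_def S(4) ..
  also have "\<dots> = (\<Sum>T\<in>Pow S. f T + f (insert 1 T))"
    unfolding sum.distrib by (rule sum_Pow_insert[OF S(1,3)])
  also have "\<dots> = (\<Sum>T\<in>Pow S. (-1) ^ card T * g (Min (insert 1 (u ` T))))"
  proof (rule sum.cong[OF refl])
    fix T assume "T \<in> Pow S"
    then have T: "T \<subseteq> {2..m}" "T \<inter> {2..m} = T" "insert 1 T \<inter> {2..m} = T"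
      and "1 \<notin> T" "finite T"
      using S(1,3) finite_subset by (auto simp: S_def)
    then show "f T + f (insert 1 T) = (-1) ^ card T * g (Min (insert 1 (u ` T)))"
      unfolding f_def g_def min_extension_yJ[OF u T(1,2)] min_extension_yJ[OF u T(1,3)]
      by (simp add: algebra_simps)
  qed
  also have "\<dots> = g 1 - g (Max (u ` S))"
  proof -
    have "u i \<le> 1" if "i \<in> S" for i
      using that cube_apply[OF u, of i] by (simp add: S_def)
    then have "Max (u ` S) \<le> 1"
      using S(1,2) by simp
    then show ?thesis
      using alternating_sum_Pow_Min[OF S(1,2), of g 1 u] by (simp add: min_absorb2)
  qed
  also have "\<dots> = survival 2 Q (pt2 (Max (u ` {2..m})) (u 1))"
    by (simp add: survival_2 g_def S_def)
  finally show ?thesis .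
qed

end

theorem mainTheorem3:
  fixes m :: nat and Q2 :: "(nat \<Rightarrow> real) \<Rightarrow> real"
  assumes "m \<ge> 2" and "quasi_copula 2 Q2"
  shows "quasi_copula m (\<lambda>u. Q2 (pt2 (Min (u ` {2..m})) (u 1)))
       \<and> (\<forall>u\<in>cube m. survival m (\<lambda>u. Q2 (pt2 (Min (u ` {2..m})) (u 1))) u
                       = survival 2 Q2 (pt2 (Max (u ` {2..m})) (u 1)))"
proof -
  have Q_star: "(\<lambda>u. Q2 (pt2 (Min (u ` {2..m})) (u 1))) = min_extension m Q2"
    by (simp add: fun_eq_iff min_extension_def)
  show ?thesis
    unfolding Q_star
    using quasi_copula_min_extension[OF assms] survival_min_extension[OF assms(1)] by blast
qed

end
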